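(* Let $E$ be a metric space, $g\in\Sigma^E$, $t_0\in[0,\widehat T_g)$, and let $\tau$ be an $\mathcal F$-stopping time on $\Sigma^E$. Define $\tau_{g;t_0}$ on $\Sigma^E$ by $$\tau_{g;t_0}(f)=\begin{cases}(\tau(g\oplus_{t_0}f)-t_0)\vee 0,& \text{if } f(0)=g(t_0);\\ \widehat T_f,&\text{otherwise}.\end{cases}$$ Then $\tau_{g;t_0}$ is also an $\mathcal F$-stopping time.
   Context: $\Sigma^E$ is the set of continuous functions $f:[0,\widehat T_f)\to E$ with lifetime $\widehat T_f\in(0,\infty]$. For $t\ge0$ let $\Sigma^E_t=\{f:\widehat T_f>t\}$ and $\pi_t(f)=f(t)$ on $\Sigma^E_t$. Let $\mathcal F^*_t$ be the $\sigma$-algebra on $\Sigma^E$ generated by the sets $\Sigma^E_s$ and the maps $\pi_s$ (on $\Sigma^E_s$, with Borel sets of $E$) for $0\le s\le t$, and let $\mathcal F=(\mathcal F_t)_{t\ge0}$ be its right-continuation, $\mathcal F_t=\bigcap_{s>t}\mathcal F^*_s$. An $\mathcal F$-stopping time is a map $\tau:\Sigma^E\to[0,\infty]$ with $\{\tau\le t\}\in\mathcal F_t$ for all $t$. For $g\in\Sigma^E$, $t_0\in[0,\widehat T_g)$ and $f\in\Sigma^E$ with $f(0)=g(t_0)$, $g\oplus_{t_0}f$ is the function with lifetime $t_0+\widehat T_f$ equal to $g(t)$ for $0\le t<t_0$ and to $f(t-t_0)$ for $t_0\le t<t_0+\widehat T_f$. *)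

theory Defs
  imports "HOL-Analysis.Analysis"
begin

text \<open>A path with lifetime is a pair (f, T): f :: real => 'e, T :: ereal the lifetime.
  Outside its domain [0,T) the function is normalised to the constant undefined,
  so that each element of Sigma^E has a unique representative.\<close>

type_synonym 'e path = "(real \<Rightarrow> 'e) \<times> ereal"

definition dom_of :: "ereal \<Rightarrow> real set" where
  "dom_of T = {t. 0 \<le> t \<and> ereal t < T}"

definition Sigma_E :: "('e::metric_space) path set" where
  "Sigma_E = {(f, T). 0 < T \<and> continuous_on (dom_of T) f \<and> (\<forall>t. t \<notin> dom_of T \<longrightarrow> f t = undefined)}"

definition Sigma_t :: "real \<Rightarrow> ('e::metric_space) path set" where
  "Sigma_t t = {p \<in> Sigma_E. ereal t < snd p}"

definition F_star :: "real \<Rightarrow> ('e::metric_space) path set set" where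
  "F_star t = sigma_sets Sigma_E
     ({Sigma_t s | s. 0 \<le> s \<and> s \<le> t} \<union>
      {{p \<in> Sigma_t s. fst p s \<in> B} | s B. 0 \<le> s \<and> s \<le> t \<and> B \<in> sets borel})"

definition F_filt :: "real \<Rightarrow> ('e::metric_space) path set set" where
  "F_filt t = (\<Inter>s\<in>{t<..}. F_star s)"

definition stopping_time_E :: "(('e::metric_space) path \<Rightarrow> ereal) \<Rightarrow> bool" where
  "stopping_time_E \<tau> \<longleftrightarrow> (\<forall>p\<in>Sigma_E. 0 \<le> \<tau> p) \<and>
     (\<forall>t::real. 0 \<le> t \<longrightarrow> {p \<in> Sigma_E. \<tau> p \<le> ereal t} \<in> F_filt t)"

definition concat_path :: "'e path \<Rightarrow> real \<Rightarrow> 'e path \<Rightarrow> 'e path" where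
  "concat_path g t0 f =
     ((\<lambda>t. if 0 \<le> t \<and> t < t0 then fst g t
           else if t0 \<le> t \<and> ereal (t - t0) < snd f then fst f (t - t0)
           else undefined),
      ereal t0 + snd f)"

definition tau_shift :: "('e path \<Rightarrow> ereal) \<Rightarrow> 'e path \<Rightarrow> real \<Rightarrow> 'e path \<Rightarrow> ereal" where
  "tau_shift \<tau> g t0 f =
     (if fst f 0 = fst g t0 then max (\<tau> (concat_path g t0 f) - ereal t0) 0 else snd f)"

end

theory Submission
  imports Defs
begin

text \<open>Concatenation after g at time t0 shifts time by t0. On paths f starting at g(t0) it
  therefore pulls every generator of F*(s + t0) back to a set in F*(s): a lifetime condition at
  time r becomes one at time r - t0, and an evaluation at time r becomes an evaluation of f at
  r - t0 if r \<ge> t0, and a condition on g alone if r < t0. Hence the concatenation pulls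
  F*(s + t0) back into F*(s), and the event that the shifted time is at most t is the pullback
  of {\<tau> \<le> t + t0} on paths starting at g(t0), together with the paths of lifetime at most t
  that start elsewhere.\<close>

lemma ereal_less_plus_iff: "ereal t < ereal t0 + T \<longleftrightarrow> ereal (t - t0) < T"
  by (cases T) auto

lemma ereal_minus_real_le_iff: "x - ereal t0 \<le> ereal t \<longleftrightarrow> x \<le> ereal (t + t0)"
  by (cases x) auto

lemma Sigma_E_lifetime_pos: "f \<in> Sigma_E \<Longrightarrow> 0 < snd f"
  by (auto simp: Sigma_E_def)

definition paths_from :: "'e \<Rightarrow> ('e::metric_space) path set" where
  "paths_from c = {f \<in> Sigma_E. fst f 0 = c}"

lemma concat_path_in_Sigma_E:
  assumes g: "g \<in> Sigma_E" and t0: "0 \<le> t0" "ereal t0 < snd g"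
    and f: "f \<in> paths_from (fst g t0)"
  shows "concat_path g t0 f \<in> Sigma_E"
proof -
  obtain gf gT ff fT where g_eq: "g = (gf, gT)" and f_eq: "f = (ff, fT)"
    by fastforce
  have gc: "continuous_on (dom_of gT) gf" and t0g: "ereal t0 < gT"
    using g t0 g_eq by (auto simp: Sigma_E_def)
  have fc: "continuous_on (dom_of fT) ff" and fT: "0 < fT" and start: "ff 0 = gf t0"
    using f f_eq g_eq by (auto simp: Sigma_E_def paths_from_def)
  let ?S = "dom_of (ereal t0 + fT)"
  let ?h = "\<lambda>t. if 0 \<le> t \<and> t < t0 then gf t
           else if t0 \<le> t \<and> ereal (t - t0) < fT then ff (t - t0) else undefined"
  have "continuous_on {x \<in> ?S. x \<le> t0} gf"
    by (rule continuous_on_subset[OF gc])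
      (use t0g in \<open>auto simp: dom_of_def le_less_trans[of _ "ereal t0"]\<close>)
  moreover have "continuous_on {x \<in> ?S. t0 \<le> x} (\<lambda>t. ff (t - t0))"
    by (rule continuous_on_compose2[OF fc]) (auto intro!: continuous_intros
        simp: dom_of_def ereal_less_plus_iff)
  ultimately have "continuous_on ?S (\<lambda>t. if t \<le> t0 then gf t else ff (t - t0))"
    by (rule continuous_on_cases_le) (use start in \<open>auto intro: continuous_intros\<close>)
  then have cont: "continuous_on ?S ?h"
    by (rule continuous_on_eq) (use start in \<open>auto simp: dom_of_def ereal_less_plus_iff\<close>)
  have before_end: "ereal (t - t0) < fT" if "t < t0" for t
    using that fT by (metis diff_less_0_iff_less less_ereal.simps(1) less_trans zero_ereal_def)
  have "?h t = undefined" if "t \<notin> ?S" for t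
    using that t0 before_end by (auto simp: dom_of_def ereal_less_plus_iff)
  moreover have "0 < ereal t0 + fT"
    using fT t0 by (cases fT) auto
  ultimately have "(?h, ereal t0 + fT) \<in> Sigma_E"
    using cont unfolding Sigma_E_def by blast
  moreover have "concat_path g t0 f = (?h, ereal t0 + fT)"
    unfolding concat_path_def g_eq f_eq fst_conv snd_conv ..
  ultimately show ?thesis
    by simp
qed

lemma Sigma_t_concat_path_iff:
  assumes "f \<in> Sigma_E" and "concat_path g t0 f \<in> Sigma_E"
  shows "concat_path g t0 f \<in> Sigma_t s \<longleftrightarrow> f \<in> Sigma_t (s - t0)"
  using assms by (auto simp: Sigma_t_def concat_path_def ereal_less_plus_iff)

interpretation F_star: sigma_algebra Sigma_E "F_star t" for t
  unfolding F_star_def by (rule sigma_algebra_sigma_sets) (auto simp: Sigma_t_def)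

lemma Sigma_t_negative: "s < 0 \<Longrightarrow> Sigma_t s = Sigma_E"
  by (auto simp: Sigma_t_def intro: less_trans[of "ereal s" 0 "snd _"] Sigma_E_lifetime_pos)

lemma Sigma_t_in_F_star:
  assumes "s \<le> t"
  shows "Sigma_t s \<in> F_star t"
proof (cases "0 \<le> s")
  case True
  with assms show ?thesis
    unfolding F_star_def by (intro sigma_sets.Basic) blast
next
  case False
  then show ?thesis
    by (simp add: Sigma_t_negative F_star.top)
qed

lemma Sigma_t_eval_in_F_star:
  "0 \<le> s \<Longrightarrow> s \<le> t \<Longrightarrow> B \<in> sets borel \<Longrightarrow> {p \<in> Sigma_t s. fst p s \<in> B} \<in> F_star t"
  unfolding F_star_def by (intro sigma_sets.Basic) blast

lemma paths_from_in_F_star: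
  assumes "0 \<le> t"
  shows "paths_from c \<in> F_star t"
proof -
  have "paths_from c = {p \<in> Sigma_t 0. fst p 0 \<in> {c}}"
    by (auto simp: paths_from_def Sigma_t_def zero_ereal_def[symmetric] Sigma_E_def)
  then show ?thesis
    using Sigma_t_eval_in_F_star[of 0 t "{c}"] assms by simp
qed

lemma fst_concat_path:
  "0 \<le> r \<Longrightarrow> f \<in> Sigma_t (r - t0) \<Longrightarrow>
    fst (concat_path g t0 f) r = (if r < t0 then fst g r else fst f (r - t0))"
  by (simp add: concat_path_def Sigma_t_def)

lemma concat_path_vimage_generator_in_F_star:
  fixes g :: "('e::metric_space) path"
  assumes g: "g \<in> Sigma_E" "0 \<le> t0" "ereal t0 < snd g" and s: "0 \<le> s"
    and a: "a \<in> {Sigma_t r | r. 0 \<le> r \<and> r \<le> s + t0} \<union>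
      {{p \<in> Sigma_t r. fst p r \<in> B} | r B. 0 \<le> r \<and> r \<le> s + t0 \<and> B \<in> sets borel}"
  shows "paths_from (fst g t0) \<inter> concat_path g t0 -` a \<in> F_star s"
proof -
  let ?A = "paths_from (fst g t0)"
  have A: "?A \<in> F_star s"
    using s by (rule paths_from_in_F_star)
  have concat_Sigma_t_iff: "concat_path g t0 f \<in> Sigma_t r \<longleftrightarrow> f \<in> Sigma_t (r - t0)"
    if "f \<in> ?A" for f r
    using that concat_path_in_Sigma_E[OF g that]
    by (simp add: Sigma_t_concat_path_iff paths_from_def)
  from a consider (lifetime) r where "a = Sigma_t r" "r \<le> s + t0"
    | (evaluation) r B where "a = {p \<in> Sigma_t r. fst p r \<in> B}" "0 \<le> r" "r \<le> s + t0"
      "B \<in> sets borel"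
    by blast
  then show ?thesis
  proof cases
    case lifetime
    then have "?A \<inter> concat_path g t0 -` a = ?A \<inter> Sigma_t (r - t0)"
      using concat_Sigma_t_iff by blast
    with lifetime A show ?thesis
      by (simp add: F_star.Int Sigma_t_in_F_star)
  next
    case evaluation
    show ?thesis
    proof (cases "r < t0")
      case True
      with evaluation have "?A \<inter> concat_path g t0 -` a =
          (if fst g r \<in> B then ?A \<inter> Sigma_t (r - t0) else {})"
        using concat_Sigma_t_iff by (auto simp: fst_concat_path)
      with evaluation A show ?thesis
        by (simp add: F_star.Int Sigma_t_in_F_star)
    next
      case False
      with evaluation have "?A \<inter> concat_path g t0 -` a =
          ?A \<inter> {p \<in> Sigma_t (r - t0). fst p (r - t0) \<in> B}"
        using concat_Sigma_t_iff by (auto simp: fst_concat_path)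
      with evaluation False A show ?thesis
        by (simp add: F_star.Int Sigma_t_eval_in_F_star)
    qed
  qed
qed

lemma concat_path_vimage_in_F_star:
  fixes g :: "('e::metric_space) path"
  assumes g: "g \<in> Sigma_E" "0 \<le> t0" "ereal t0 < snd g" and s: "0 \<le> s"
    and X: "X \<in> F_star (s + t0)"
  shows "paths_from (fst g t0) \<inter> concat_path g t0 -` X \<in> F_star s"
  using X unfolding F_star_def[of "s + t0"]
proof (induction rule: sigma_sets.induct)
  case (Basic a)
  then show ?case
    by (rule concat_path_vimage_generator_in_F_star[OF g s])
next
  case Empty
  show ?case
    by simp
next
  case (Compl a)
  let ?A = "paths_from (fst g t0)"
  have "?A \<inter> concat_path g t0 -` (Sigma_E - a) = ?A - (?A \<inter> concat_path g t0 -` a)"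
    using concat_path_in_Sigma_E[OF g] by blast
  with Compl.IH s show ?case
    by (simp add: F_star.Diff paths_from_in_F_star)
next
  case (Union a)
  have "paths_from (fst g t0) \<inter> concat_path g t0 -` \<Union> (range a) =
      (\<Union>i. paths_from (fst g t0) \<inter> concat_path g t0 -` a i)"
    by blast
  moreover have "(\<Union>i. paths_from (fst g t0) \<inter> concat_path g t0 -` a i) \<in> F_star s"
    using Union.IH by (intro F_star.countable_UN) auto
  ultimately show ?case
    by simp
qed

lemma tau_shift_sublevel_eq:
  fixes g :: "('e::metric_space) path"
  assumes g: "g \<in> Sigma_E" "0 \<le> t0" "ereal t0 < snd g" and t: "0 \<le> t"
  shows "{p \<in> Sigma_E. tau_shift \<tau> g t0 p \<le> ereal t} =
    (paths_from (fst g t0) \<inter> concat_path g t0 -` {q \<in> Sigma_E. \<tau> q \<le> ereal (t + t0)}) \<union>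
    (Sigma_E - Sigma_t t - paths_from (fst g t0))"
  using concat_path_in_Sigma_E[OF g] t
  by (auto simp: tau_shift_def ereal_minus_real_le_iff paths_from_def Sigma_t_def not_less)

theorem lemma2p10:
  fixes g :: "('e::metric_space) path" and t0 :: real and \<tau> :: "'e path \<Rightarrow> ereal"
  assumes "g \<in> Sigma_E" and "0 \<le> t0" and "ereal t0 < snd g"
    and "stopping_time_E \<tau>"
  shows "stopping_time_E (tau_shift \<tau> g t0)"
  unfolding stopping_time_E_def
proof (intro conjI ballI allI impI)
  fix p :: "'e path"
  assume "p \<in> Sigma_E"
  then show "0 \<le> tau_shift \<tau> g t0 p"
    by (auto simp: tau_shift_def less_imp_le dest: Sigma_E_lifetime_pos)
next
  fix t :: real
  assume t: "0 \<le> t"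
  have "{p \<in> Sigma_E. tau_shift \<tau> g t0 p \<le> ereal t} \<in> F_star s" if "t < s" for s
  proof -
    have "{q \<in> Sigma_E. \<tau> q \<le> ereal (t + t0)} \<in> F_star (s + t0)"
      using assms(2,4) t that by (auto simp: stopping_time_E_def F_filt_def)
    then have "paths_from (fst g t0) \<inter> concat_path g t0 -` {q \<in> Sigma_E. \<tau> q \<le> ereal (t + t0)}
        \<in> F_star s"
      using t that by (intro concat_path_vimage_in_F_star[OF assms(1-3)]) auto
    moreover have "Sigma_t t \<in> F_star s" and "paths_from (fst g t0) \<in> F_star s"
      using t that by (auto intro: Sigma_t_in_F_star paths_from_in_F_star)
    ultimately show ?thesis
      unfolding tau_shift_sublevel_eq[OF assms(1-3) t]
      by (blast intro: F_star.Un F_star.Diff F_star.top)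
  qed
  then show "{p \<in> Sigma_E. tau_shift \<tau> g t0 p \<le> ereal t} \<in> F_filt t"
    by (simp add: F_filt_def)
qed

end
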